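(* For every integer $a\geq 2$, $$\sum_{n\geq 1}\frac{H_n}{(2n+1)^{2a-1}}=-2\lambda(2a-1)\ln 2+\Big(a-\frac12\Big)\lambda(2a)-\sum_{q=1}^{a-2}\lambda(2q+1)\lambda(2a-2q-1),$$ where an empty sum equals $0$.
   Context: $H_n=1+\frac12+\cdots+\frac1n$ is the $n$-th harmonic number. For real $s>1$, $\lambda(s)=\sum_{n\geq 1}\frac{1}{(2n-1)^s}=(1-2^{-s})\zeta(s)$. *)

theory Defs
  imports "HOL-Analysis.Analysis"
begin

definition dlambda :: "real \<Rightarrow> real" where
  "dlambda s = (\<Sum>m. 1 / (2 * real m + 1) powr s)"

end

theory Submission
  imports Defs "HOL-Real_Asymp.Real_Asymp"
begin

text \<open>
  Write o(j) = 2j + 1 and p(m, j) = 1/(o(j) (o(j) - o(m))) - 1/(o(j) (o(j) + o(m))), the singular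
  term j = m being omitted. Pairing with the alternating harmonic series and telescoping gives
  sum over j of p(m, j) = (1/o(m) - 2 ln 2 - H(m)) / o(m). Put a = b + 2. By partial fractions,
  p(m, j) / o(m)^(2b+2) + p(j, m) / o(j)^(2b+2) equals twice the sum over q < b of
  1 / (o(j)^(2q+3) o(m)^(2b+1-2q)), up to a correction on the diagonal j = m. The double series
  of p(m, j) / o(m)^(2b+2) converges absolutely, so summing it by rows and by columns evaluates
  the sum over m of (1/o(m) - 2 ln 2 - H(m)) / o(m)^(2b+3) through lambda(2b+4) and the products
  lambda(2q+3) lambda(2b+1-2q); the theorem follows.
\<close>

lemma sums_telescope_shift:
  fixes h :: "nat \<Rightarrow> 'a::real_normed_vector"
  assumes "h \<longlonglongrightarrow> 0"
  shows "(\<lambda>i. h i - h (i + n)) sums (\<Sum>i<n. h i)"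
proof (induction n)
  case (Suc n)
  have "(\<lambda>i. h (i + n) - h (Suc (i + n))) sums h n"
    using telescope_sums'[OF LIMSEQ_ignore_initial_segment[OF assms, of n]] by simp
  from sums_add[OF Suc this] show ?case by simp
qed simp

lemma summable_on_sums_imp_has_sum:
  fixes f :: "nat \<Rightarrow> 'a::banach"
  assumes "f summable_on UNIV" and "f sums s"
  shows "(f has_sum s) UNIV"
  using assms by (metis has_sum_infsum has_sum_imp_sums sums_unique2)

lemma double_series_rows_columns:
  fixes F :: "nat \<Rightarrow> nat \<Rightarrow> real"
  assumes summable: "(\<lambda>(j, k). F j k) summable_on UNIV"
    and rows: "\<And>j. F j sums r j"
    and columns: "\<And>k. (\<lambda>j. F j k) sums c k"
  obtains T where "r sums T" and "c sums T"
proof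
  define T where "T = infsum (\<lambda>(j, k). F j k) UNIV"
  have T: "((\<lambda>(j, k). F j k) has_sum T) (UNIV \<times> UNIV)"
    using summable unfolding T_def by (simp add: has_sum_infsum)
  have T_swap: "((\<lambda>(k, j). F j k) has_sum T) (UNIV \<times> UNIV)"
    using T has_sum_swap[of "\<lambda>(j, k). F j k" UNIV UNIV T] by (simp add: case_prod_unfold)
  have "(F j has_sum r j) UNIV" for j
    using summable_on_SigmaD1[where f = F, OF T[THEN has_sum_imp_summable]] rows by (intro summable_on_sums_imp_has_sum) auto
  then show "r sums T"
    using has_sum_Sigma'[OF T] by (simp add: has_sum_imp_sums)
  have "((\<lambda>j. F j k) has_sum c k) UNIV" for k
    using summable_on_SigmaD1[where f = "\<lambda>k j. F j k", OF T_swap[THEN has_sum_imp_summable]] columns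
    by (intro summable_on_sums_imp_has_sum) auto
  then show "c sums T"
    using has_sum_Sigma'[OF T_swap] by (simp add: has_sum_imp_sums)
qed

lemma sums_harm_telescope:
  "(\<lambda>k. inverse (real (Suc k)) - inverse (real (Suc (k + m)))) sums harm m"
proof -
  have "(\<lambda>k. inverse (real (Suc k))) \<longlonglongrightarrow> 0"
    using LIMSEQ_inverse_real_of_nat by simp
  from sums_telescope_shift[OF this, of m] show ?thesis
    by (simp add: harm_altdef add.commute)
qed

lemma sum_inverse_diff_eq_harm: "(\<Sum>k<m. 1 / real (m - k)) = harm m"
  by (subst sum.nat_diff_reindex[symmetric]) (simp add: harm_altdef inverse_eq_divide)

definition odd_num :: "nat \<Rightarrow> real" where
  "odd_num i = 2 * real i + 1"

lemma odd_num_pos [simp]: "odd_num i > 0"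
  and odd_num_nonneg [simp]: "odd_num i \<ge> 0"
  and odd_num_ge_1 [simp]: "odd_num i \<ge> 1"
  and odd_num_nonzero [simp]: "odd_num i \<noteq> 0"
  and odd_num_eq_iff [simp]: "odd_num i = odd_num j \<longleftrightarrow> i = j"
  by (auto simp: odd_num_def)

lemma LIMSEQ_inverse_odd_num: "(\<lambda>i. 1 / odd_num i) \<longlonglongrightarrow> 0"
  unfolding odd_num_def by real_asymp

lemma dlambda_sums:
  assumes "s > 1"
  shows "(\<lambda>m. 1 / odd_num m powr s) sums dlambda s"
proof -
  have "summable (\<lambda>n. real (Suc n) powr - s)"
    using summable_real_powr_iff[of "- s"] assms by (subst summable_Suc_iff) simp
  moreover have "norm (1 / odd_num n powr s) \<le> real (Suc n) powr - s" for n
    using assms by (simp add: powr_minus divide_inverse odd_num_def powr_mono2 le_imp_inverse_le)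
  ultimately have "summable (\<lambda>m. 1 / odd_num m powr s)"
    by (rule summable_comparison_test')
  then show ?thesis
    by (simp add: dlambda_def odd_num_def summable_sums)
qed

lemma dlambda_of_nat_sums:
  assumes "s \<ge> 2"
  shows "(\<lambda>m. 1 / odd_num m ^ s) sums dlambda (real s)"
  using dlambda_sums[of "real s"] assms by (simp add: powr_realpow)

lemma sums_inverse_odd_plus:
  "(\<lambda>j. 1 / (odd_num j * (odd_num j + odd_num m))) sums ((ln 2 + harm m / 2) / odd_num m)"
proof -
  have "(\<lambda>j. ((inverse (real (2 * j + 1)) - inverse (real (2 * j + 2)))
      + (inverse (real (Suc j)) - inverse (real (Suc (j + m)))) / 2) / odd_num m)
      sums ((ln 2 + harm m / 2) / odd_num m)"
    by (intro sums_divide sums_add alternating_harmonic_series_sums' sums_harm_telescope)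
  moreover have "((inverse (real (2 * j + 1)) - inverse (real (2 * j + 2)))
      + (inverse (real (Suc j)) - inverse (real (Suc (j + m)))) / 2) / odd_num m
      = 1 / (odd_num j * (odd_num j + odd_num m))" for j
    by (simp add: odd_num_def divide_simps) (simp add: algebra_simps)
  ultimately show ?thesis by simp
qed

lemma sums_inverse_odd_minus:
  "(\<lambda>j. if j = m then 0 else 1 / (odd_num j * (odd_num j - odd_num m)))
     sums ((1 / odd_num m - ln 2 - harm m / 2) / odd_num m)"
    (is "?f sums _")
proof -
  \<comment> \<open>From index \<open>m + 1\<close> on the series telescopes against the alternating harmonic series.\<close>
  have "(\<lambda>i. inverse (real (2 * i + 2)) - inverse (real (2 * i + 1))) sums (- ln 2)"
    using sums_minus[OF alternating_harmonic_series_sums'] by simp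
  then have "(\<lambda>i. ((inverse (real (2 * i + 2)) - inverse (real (2 * i + 1)))
      + (1 / odd_num i - 1 / odd_num (i + Suc m))) / odd_num m)
      sums ((- ln 2 + (\<Sum>i<Suc m. 1 / odd_num i)) / odd_num m)"
    by (intro sums_divide sums_add sums_telescope_shift LIMSEQ_inverse_odd_num)
  moreover have "((inverse (real (2 * i + 2)) - inverse (real (2 * i + 1)))
      + (1 / odd_num i - 1 / odd_num (i + Suc m))) / odd_num m = ?f (i + Suc m)" for i
    by (simp add: odd_num_def divide_simps) (simp add: algebra_simps)
  ultimately have "?f sums ((- ln 2 + (\<Sum>i<Suc m. 1 / odd_num i)) / odd_num m + (\<Sum>i<Suc m. ?f i))"
    by (intro sums_iff_shift[THEN iffD1]) simp
  moreover have "?f i = (- (1 / real (m - i)) / 2 - 1 / odd_num i) / odd_num m" if "i < m" for i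
  proof -
    have "real i < real m" using that by simp
    then show ?thesis
      using that by (simp add: odd_num_def of_nat_diff divide_simps) (simp add: algebra_simps)
  qed
  then have "(\<Sum>i<Suc m. ?f i) = (\<Sum>i<m. (- (1 / real (m - i)) / 2 - 1 / odd_num i) / odd_num m)"
    by simp
  also have "\<dots> = (- harm m / 2 - (\<Sum>i<m. 1 / odd_num i)) / odd_num m"
    unfolding sum_inverse_diff_eq_harm[symmetric]
    by (simp only: sum_divide_distrib[symmetric] sum_subtractf sum_negf)
  finally show ?thesis
    using \<open>?f sums _\<close> by (simp add: add_divide_distrib[symmetric] algebra_simps)
qed

definition mixed_sum :: "nat \<Rightarrow> real \<Rightarrow> real \<Rightarrow> real" where
  "mixed_sum b x y = (\<Sum>q<b. 1 / (x ^ (2 * q + 3) * y ^ (2 * b + 1 - 2 * q)))"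

lemma mixed_sum_Suc:
  "mixed_sum (Suc b) x y = mixed_sum b x y / y\<^sup>2 + 1 / (x ^ (2 * b + 3) * y ^ 3)"
proof -
  have "y ^ (2 * Suc b + 1 - 2 * q) = y ^ (2 * b + 1 - 2 * q) * y\<^sup>2" if "q < b" for q
  proof -
    have "2 * Suc b + 1 - 2 * q = (2 * b + 1 - 2 * q) + 2" using that by simp
    then show ?thesis by (simp only: power_add)
  qed
  then show ?thesis
    by (simp add: mixed_sum_def sum_divide_distrib mult.assoc)
qed

lemma mixed_sum_diff_squares:
  assumes "x \<noteq> 0" "y \<noteq> 0"
  shows "(x\<^sup>2 - y\<^sup>2) * mixed_sum b x y = 1 / (x * y ^ (2 * b + 1)) - 1 / (x ^ (2 * b + 1) * y)"
proof (induction b)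
  case (Suc b)
  have "(x\<^sup>2 - y\<^sup>2) * mixed_sum (Suc b) x y
      = ((x\<^sup>2 - y\<^sup>2) * mixed_sum b x y) / y\<^sup>2 + (x\<^sup>2 - y\<^sup>2) / (x ^ (2 * b + 3) * y ^ 3)"
    by (simp add: mixed_sum_Suc field_simps)
  also have "\<dots> = 1 / (x * y ^ (2 * Suc b + 1)) - 1 / (x ^ (2 * Suc b + 1) * y)"
  proof -
    have "x ^ (2 * b + 3) = x ^ (2 * b + 1) * x\<^sup>2" "x ^ (2 * Suc b + 1) = x ^ (2 * b + 1) * x\<^sup>2"
      "y ^ (2 * Suc b + 1) = y ^ (2 * b + 1) * y\<^sup>2"
      by (simp_all add: power_add power2_eq_square power3_eq_cube mult_ac)
    then show ?thesis
      using assms unfolding Suc by (simp add: field_simps power2_eq_square power3_eq_cube)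
  qed
  finally show ?case .
qed (simp add: mixed_sum_def)

lemma mixed_sum_same: "mixed_sum b x x = real b / x ^ (2 * b + 4)"
proof -
  have "x ^ (2 * q + 3) * x ^ (2 * b + 1 - 2 * q) = x ^ (2 * b + 4)" if "q < b" for q
  proof -
    have "(2 * q + 3) + (2 * b + 1 - 2 * q) = 2 * b + 4" using that by simp
    then show ?thesis by (simp only: power_add[symmetric])
  qed
  then show ?thesis by (simp add: mixed_sum_def)
qed

lemma mixed_sum_partial_fractions:
  assumes "x > 0" "y > 0" "x \<noteq> y"
  shows "2 * mixed_sum b x y
    = (1 / (x * (x - y)) - 1 / (x * (x + y))) / y ^ (2 * b + 2)
      - (1 / (x ^ (2 * b + 2) * y * (x - y)) + 1 / (x ^ (2 * b + 2) * y * (x + y)))"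
proof -
  define X Y where "X = x ^ (2 * b + 1)" and "Y = y ^ (2 * b + 1)"
  have nz: "x - y \<noteq> 0" "x + y \<noteq> 0" "X > 0" "Y > 0"
    using assms by (auto simp: X_def Y_def)
  have "((x - y) * (x + y)) * mixed_sum b x y = 1 / (x * Y) - 1 / (X * y)"
    using mixed_sum_diff_squares[of x y b] assms unfolding X_def Y_def
    by (simp add: power2_eq_square algebra_simps)
  then have "mixed_sum b x y = (1 / (x * Y) - 1 / (X * y)) / ((x - y) * (x + y))"
    using nz by (simp add: eq_divide_eq mult.commute)
  moreover have "x ^ (2 * b + 2) = X * x" "y ^ (2 * b + 2) = Y * y"
    by (simp_all add: X_def Y_def)
  ultimately show ?thesis
    using nz assms by (simp add: divide_simps) (simp add: mult_ac flip: right_diff_distrib)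
qed

definition odd_partial_fraction :: "nat \<Rightarrow> nat \<Rightarrow> real" where
  "odd_partial_fraction m j =
     (if j = m then 0 else 1 / (odd_num j * (odd_num j - odd_num m)))
     - 1 / (odd_num j * (odd_num j + odd_num m))"

lemma odd_partial_fraction_sums:
  "odd_partial_fraction m sums ((1 / odd_num m - 2 * ln 2 - harm m) / odd_num m)"
proof -
  have "odd_partial_fraction m sums
      ((1 / odd_num m - ln 2 - harm m / 2) / odd_num m - (ln 2 + harm m / 2) / odd_num m)"
    unfolding odd_partial_fraction_def by (intro sums_diff sums_inverse_odd_minus sums_inverse_odd_plus)
  moreover have "(1 / odd_num m - ln 2 - harm m / 2) / odd_num m - (ln 2 + harm m / 2) / odd_num m
      = (1 / odd_num m - 2 * ln 2 - harm m) / odd_num m"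
    by (simp add: field_simps)
  ultimately show ?thesis by simp
qed

lemma odd_partial_fraction_add_swap:
  "odd_partial_fraction m j / odd_num m ^ (2 * b + 2) + odd_partial_fraction j m / odd_num j ^ (2 * b + 2)
     = 2 * mixed_sum b (odd_num j) (odd_num m) - (if j = m then (2 * real b + 1) / odd_num m ^ (2 * b + 4) else 0)"
proof (cases "j = m")
  case True
  have "odd_num m ^ (2 * b + 4) = odd_num m ^ (2 * b + 2) * (odd_num m)\<^sup>2"
    by (simp add: power_add numeral_eq_Suc)
  then show ?thesis
    using True by (simp add: odd_partial_fraction_def mixed_sum_same field_simps power2_eq_square)
next
  case False
  define x y where "x = odd_num j" and "y = odd_num m"
  have xy: "x > 0" "y > 0" "x \<noteq> y"
    using False by (simp_all add: x_def y_def)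
  have "odd_partial_fraction m j = 1 / (x * (x - y)) - 1 / (x * (x + y))"
    using False by (simp add: odd_partial_fraction_def x_def y_def)
  moreover have "odd_partial_fraction j m / u = - (1 / (u * y * (x - y)) + 1 / (u * y * (x + y)))"
    if "u \<noteq> 0" for u
    using False xy that unfolding odd_partial_fraction_def x_def [symmetric] y_def [symmetric]
    by (simp add: divide_simps) (simp add: algebra_simps)
  ultimately show ?thesis
    using mixed_sum_partial_fractions[OF xy(1-3), of b] False by (simp add: x_def y_def)
qed

definition odd_partial_fraction_majorant :: "nat \<Rightarrow> nat \<Rightarrow> real" where
  "odd_partial_fraction_majorant m j =
     (if j < m then 2 / odd_num m else 0) + (if m < j then 1 / (odd_num (j - m - 1))\<^sup>2 else 0)
     + 1 / (odd_num j)\<^sup>2"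

lemma odd_partial_fraction_majorant_nonneg: "odd_partial_fraction_majorant m j \<ge> 0"
  by (simp add: odd_partial_fraction_majorant_def)

lemma abs_odd_partial_fraction_le: "\<bar>odd_partial_fraction m j\<bar> \<le> odd_partial_fraction_majorant m j"
proof -
  have plus: "\<bar>1 / (odd_num j * (odd_num j + odd_num m))\<bar> \<le> 1 / (odd_num j)\<^sup>2"
    by (simp add: odd_num_def power2_eq_square frac_le mult_left_mono)
  have minus: "\<bar>if j = m then 0 else 1 / (odd_num j * (odd_num j - odd_num m))\<bar>
      \<le> (if j < m then 2 / odd_num m else 0) + (if m < j then 1 / (odd_num (j - m - 1))\<^sup>2 else 0)"
  proof (cases j m rule: linorder_cases)
    case less
    define d where "d = odd_num m - odd_num j"
    have "d \<ge> 1" using less by (simp add: d_def odd_num_def)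
    then have "odd_num j \<le> odd_num j * d" "d \<le> odd_num j * d"
      using mult_left_mono[of 1 d "odd_num j"] mult_right_mono[of 1 "odd_num j" d] by simp_all
    then have "odd_num m \<le> 2 * (odd_num j * d)"
      unfolding d_def by linarith
    moreover have "\<bar>1 / (odd_num j * (odd_num j - odd_num m))\<bar> = 1 / (odd_num j * d)"
      using less unfolding d_def by (simp add: abs_mult odd_num_def)
    ultimately show ?thesis
      using less \<open>d \<ge> 1\<close> by (simp add: divide_simps)
  next
    case greater
    have "odd_num (j - m - 1) \<le> odd_num j - odd_num m" "odd_num (j - m - 1) \<le> odd_num j"
      using greater by (simp_all add: odd_num_def of_nat_diff)
    then have "(odd_num (j - m - 1))\<^sup>2 \<le> odd_num j * (odd_num j - odd_num m)"
      unfolding power2_eq_square by (intro mult_mono) auto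
    then show ?thesis
      using greater by (simp add: frac_le)
  qed simp
  show ?thesis
    using abs_triangle_ineq4[of "if j = m then 0 else 1 / (odd_num j * (odd_num j - odd_num m))"
        "1 / (odd_num j * (odd_num j + odd_num m))"] plus minus
    unfolding odd_partial_fraction_def odd_partial_fraction_majorant_def by linarith
qed

lemma odd_partial_fraction_majorant_sums:
  "odd_partial_fraction_majorant m sums (2 * real m / odd_num m + 2 * dlambda 2)"
proof -
  have lt: "(\<lambda>j. if j < m then 2 / odd_num m else 0) sums (2 * real m / odd_num m)"
    using sums_If_finite_set[of "{..<m}" "\<lambda>_. 2 / odd_num m"] by (simp add: mult.commute)
  have sq: "(\<lambda>j. 1 / (odd_num j)\<^sup>2) sums dlambda 2"
    using dlambda_of_nat_sums[of 2] by simp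
  define f where "f j = (if m < j then 1 / (odd_num (j - m - 1))\<^sup>2 else 0)" for j
  have "(\<lambda>i. f (i + Suc m)) sums dlambda 2"
    using sq by (simp add: f_def)
  then have "f sums (dlambda 2 + (\<Sum>i<Suc m. f i))"
    by (rule sums_iff_shift[THEN iffD1])
  then have gt: "f sums dlambda 2"
    by (simp add: f_def)
  show ?thesis
    using sums_add[OF sums_add[OF lt gt] sq] unfolding f_def odd_partial_fraction_majorant_def [abs_def]
    by (simp add: add.commute)
qed

lemma odd_partial_fraction_double_summable:
  assumes "e \<ge> 2"
  shows "(\<lambda>(m, j). odd_partial_fraction m j / odd_num m ^ e) summable_on UNIV"
proof -
  define g where "g m = (2 * real m / odd_num m + 2 * dlambda 2) / odd_num m ^ e" for m
  have rows: "((\<lambda>j. odd_partial_fraction_majorant m j / odd_num m ^ e) has_sum g m) UNIV" for m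
    unfolding g_def
    by (intro sums_nonneg_imp_has_sum sums_divide odd_partial_fraction_majorant_sums)
      (simp add: odd_partial_fraction_majorant_nonneg)
  have lambda_2: "0 \<le> dlambda 2"
    using sums_le[OF _ sums_zero dlambda_of_nat_sums[of 2]] by simp
  have "summable (\<lambda>m. (1 + 2 * dlambda 2) * (1 / odd_num m ^ e))"
    using dlambda_of_nat_sums[OF assms] by (intro summable_mult) (simp add: sums_iff)
  then have "(\<lambda>m. (1 + 2 * dlambda 2) * (1 / odd_num m ^ e)) summable_on UNIV"
    using lambda_2 by (subst summable_on_UNIV_nonneg_real_iff) simp_all
  moreover have "g m \<le> (1 + 2 * dlambda 2) * (1 / odd_num m ^ e)" "0 \<le> g m" for m
  proof -
    have "2 * real m / odd_num m \<le> 1"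
      by (simp add: odd_num_def)
    then show "g m \<le> (1 + 2 * dlambda 2) * (1 / odd_num m ^ e)" "0 \<le> g m"
      using lambda_2 by (simp_all add: g_def divide_right_mono)
  qed
  ultimately have "g summable_on UNIV"
    by (rule summable_on_comparison_test)
  then have "(\<lambda>(m, j). odd_partial_fraction_majorant m j / odd_num m ^ e) summable_on UNIV \<times> UNIV"
    using rows by (intro summable_on_SigmaI[where g = g]) (simp_all add: odd_partial_fraction_majorant_nonneg)
  then have "(\<lambda>x. norm ((\<lambda>(m, j). odd_partial_fraction m j / odd_num m ^ e) x)) summable_on UNIV \<times> UNIV"
    by (rule Infinite_Sum.abs_summable_on_comparison_test')
      (auto simp: abs_odd_partial_fraction_le divide_right_mono)
  from abs_summable_summable[OF this] show ?thesis
    by (simp only: UNIV_Times_UNIV)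
qed

lemma mixed_sum_sums:
  "(\<lambda>m. mixed_sum b x (odd_num m)) sums (\<Sum>q<b. dlambda (real (2 * b + 1 - 2 * q)) / x ^ (2 * q + 3))"
  unfolding mixed_sum_def
proof (rule sums_sum)
  fix q assume "q \<in> {..<b}"
  then have "(\<lambda>m. 1 / odd_num m ^ (2 * b + 1 - 2 * q) / x ^ (2 * q + 3))
      sums (dlambda (real (2 * b + 1 - 2 * q)) / x ^ (2 * q + 3))"
    by (intro sums_divide dlambda_of_nat_sums) auto
  then show "(\<lambda>m. 1 / (x ^ (2 * q + 3) * odd_num m ^ (2 * b + 1 - 2 * q)))
      sums (dlambda (real (2 * b + 1 - 2 * q)) / x ^ (2 * q + 3))"
    by (simp add: mult.commute)
qed

lemma odd_partial_fraction_row_sums: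
  "(\<lambda>j. odd_partial_fraction m j / odd_num m ^ (2 * b + 2))
     sums ((1 / odd_num m - 2 * ln 2 - harm m) / odd_num m ^ (2 * b + 3))"
  using sums_divide[OF odd_partial_fraction_sums, of m "odd_num m ^ (2 * b + 2)"]
  by (simp add: power_add numeral_eq_Suc field_simps)

lemma odd_partial_fraction_column_sums:
  "(\<lambda>m. odd_partial_fraction m j / odd_num m ^ (2 * b + 2)) sums
     (2 * (\<Sum>q<b. dlambda (real (2 * b + 1 - 2 * q)) / odd_num j ^ (2 * q + 3))
      - (2 * real b + 1) / odd_num j ^ (2 * b + 4)
      - (1 / odd_num j - 2 * ln 2 - harm j) / odd_num j ^ (2 * b + 3))"
proof -
  have "odd_partial_fraction m j / odd_num m ^ (2 * b + 2)
      = 2 * mixed_sum b (odd_num j) (odd_num m)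
        - (if m = j then (2 * real b + 1) / odd_num j ^ (2 * b + 4) else 0)
        - odd_partial_fraction j m / odd_num j ^ (2 * b + 2)" for m
    using odd_partial_fraction_add_swap[of m j b] by (auto simp: algebra_simps)
  then show ?thesis
    using odd_partial_fraction_row_sums[of j b]
    by (simp only:) (intro sums_diff sums_mult mixed_sum_sums sums_single)
qed

lemma odd_partial_fraction_double_sums:
  "(\<lambda>k. (1 / odd_num k - 2 * ln 2 - harm k) / odd_num k ^ (2 * b + 3)) sums
     ((\<Sum>q<b. dlambda (real (2 * q + 3)) * dlambda (real (2 * b + 1 - 2 * q)))
      - (2 * real b + 1) / 2 * dlambda (real (2 * b + 4)))"
proof -
  define Q where "Q = (\<Sum>q<b. dlambda (real (2 * q + 3)) * dlambda (real (2 * b + 1 - 2 * q)))"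
  define P where "P j = (\<Sum>q<b. dlambda (real (2 * b + 1 - 2 * q)) / odd_num j ^ (2 * q + 3))" for j
  define R where "R k = (1 / odd_num k - 2 * ln 2 - harm k) / odd_num k ^ (2 * b + 3)" for k
  obtain T where T_rows: "R sums T"
      and T_columns: "(\<lambda>j. 2 * P j - (2 * real b + 1) / odd_num j ^ (2 * b + 4) - R j) sums T"
    using double_series_rows_columns[OF odd_partial_fraction_double_summable
        odd_partial_fraction_row_sums odd_partial_fraction_column_sums]
    unfolding P_def R_def by auto
  have "(\<lambda>j. 2 * P j - (2 * real b + 1) * (1 / odd_num j ^ (2 * b + 4))) sums (T + T)"
    using sums_add[OF T_columns T_rows] by simp
  moreover have "P sums Q"
    unfolding P_def Q_def
  proof (rule sums_sum)
    fix q
    show "(\<lambda>j. dlambda (real (2 * b + 1 - 2 * q)) / odd_num j ^ (2 * q + 3))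
        sums (dlambda (real (2 * q + 3)) * dlambda (real (2 * b + 1 - 2 * q)))"
      using sums_mult[OF dlambda_of_nat_sums[of "2 * q + 3"], of "dlambda (real (2 * b + 1 - 2 * q))"]
      by (simp add: mult.commute)
  qed
  then have "(\<lambda>j. 2 * P j - (2 * real b + 1) * (1 / odd_num j ^ (2 * b + 4)))
      sums (2 * Q - (2 * real b + 1) * dlambda (real (2 * b + 4)))"
    by (intro sums_diff sums_mult dlambda_of_nat_sums) simp_all
  ultimately have "T + T = 2 * Q - (2 * real b + 1) * dlambda (real (2 * b + 4))"
    by (rule sums_unique2)
  then have "T = Q - (2 * real b + 1) / 2 * dlambda (real (2 * b + 4))"
    by simp
  with T_rows show ?thesis
    unfolding R_def Q_def by simp
qed

lemma harm_odd_series_sums: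
  "(\<lambda>k. harm k / odd_num k ^ (2 * b + 3)) sums
     ((2 * real b + 3) / 2 * dlambda (real (2 * b + 4))
      - (\<Sum>q<b. dlambda (real (2 * q + 3)) * dlambda (real (2 * b + 1 - 2 * q)))
      - 2 * ln 2 * dlambda (real (2 * b + 3)))"
proof -
  have "(\<lambda>k. 1 / odd_num k ^ (2 * b + 4) - (1 / odd_num k - 2 * ln 2 - harm k) / odd_num k ^ (2 * b + 3)
      - 2 * ln 2 * (1 / odd_num k ^ (2 * b + 3))) sums
      (dlambda (real (2 * b + 4))
       - ((\<Sum>q<b. dlambda (real (2 * q + 3)) * dlambda (real (2 * b + 1 - 2 * q)))
          - (2 * real b + 1) / 2 * dlambda (real (2 * b + 4)))
       - 2 * ln 2 * dlambda (real (2 * b + 3)))"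
    by (intro sums_diff sums_mult odd_partial_fraction_double_sums dlambda_of_nat_sums) simp_all
  moreover have "1 / odd_num k ^ (2 * b + 4) - (1 / odd_num k - 2 * ln 2 - harm k) / odd_num k ^ (2 * b + 3)
      - 2 * ln 2 * (1 / odd_num k ^ (2 * b + 3)) = harm k / odd_num k ^ (2 * b + 3)" for k
    by (simp add: power_add numeral_eq_Suc field_simps)
  ultimately have "(\<lambda>k. harm k / odd_num k ^ (2 * b + 3)) sums
      (dlambda (real (2 * b + 4))
       - ((\<Sum>q<b. dlambda (real (2 * q + 3)) * dlambda (real (2 * b + 1 - 2 * q)))
          - (2 * real b + 1) / 2 * dlambda (real (2 * b + 4)))
       - 2 * ln 2 * dlambda (real (2 * b + 3)))"
    by (simp only:)
  then show ?thesis
    by (simp add: field_simps)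
qed

theorem mainTheorem3:
  fixes a :: nat
  assumes "a \<ge> 2"
  shows "(\<lambda>m. harm (Suc m) / (2 * real (Suc m) + 1) ^ (2 * a - 1)) sums
           (- 2 * dlambda (real (2 * a - 1)) * ln 2
            + (real a - 1 / 2) * dlambda (real (2 * a))
            - (\<Sum>q = 1..a - 2. dlambda (real (2 * q + 1)) * dlambda (real (2 * a - 2 * q - 1))))"
proof -
  obtain b where a: "a = b + 2"
    using le_Suc_ex[OF assms] by (auto simp: add.commute)
  have exponents: "2 * a - 1 = 2 * b + 3" "2 * a = 2 * b + 4"
    using a by simp_all
  have "(\<lambda>m. harm (Suc m) / odd_num (Suc m) ^ (2 * b + 3)) sums
      ((2 * real b + 3) / 2 * dlambda (real (2 * b + 4))
       - (\<Sum>q<b. dlambda (real (2 * q + 3)) * dlambda (real (2 * b + 1 - 2 * q)))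
       - 2 * ln 2 * dlambda (real (2 * b + 3)))"
    using harm_odd_series_sums[of b] sums_Suc_iff[of "\<lambda>k. harm k / odd_num k ^ (2 * b + 3)"]
    by (simp add: harm_expand(1))
  then show ?thesis
    unfolding exponents by (simp add: odd_num_def a sum.atLeast1_atMost_eq algebra_simps add_divide_distrib)
qed

end
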